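(* For every digraph $X$, $U_{X^{\mathrm{op}}}=U_X$.
   Context: A digraph $X=(V,E)$: $V$ finite, $E\subset\{(u,v)\in V\times V\mid u\ne v\}$; $X^{\mathrm{op}}=(V,\{(v,u)\mid(u,v)\in E\})$. $n=|V|$, $\Sigma_V$ is the set of bijections $\sigma:[n]\to V$, $X\mathrm{Des}(\sigma)=\{i\in[n-1]\mid(\sigma_i,\sigma_{i+1})\in E\}$. $F_I=\sum x_{i_1}\cdots x_{i_n}$ over $1\le i_1\le\cdots\le i_n$ with $i_j<i_{j+1}$ for all $j\in I$. The Redei–Berge symmetric function is $U_X=\sum_{\sigma\in\Sigma_V}F_{X\mathrm{Des}(\sigma)}$. *)

theory Defs
  imports Main "HOL-Library.Multiset"
begin

definition digraph :: "'a set \<Rightarrow> ('a \<times> 'a) set \<Rightarrow> bool" where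
  "digraph V E \<longleftrightarrow> finite V \<and> E \<subseteq> {(u,v). u \<in> V \<and> v \<in> V \<and> u \<noteq> v}"

definition op_edges :: "('a \<times> 'a) set \<Rightarrow> ('a \<times> 'a) set" where
  "op_edges E = {(v,u) | u v. (u,v) \<in> E}"

(* Sigma_V: bijections [n] -> V, represented as lists sigma = [sigma_1,...,sigma_n]
   (sigma_i = sigma ! (i-1)) that enumerate V without repetition. *)
definition Sigma_V :: "'a set \<Rightarrow> 'a list set" where
  "Sigma_V V = {xs. distinct xs \<and> set xs = V}"

definition XDes :: "('a \<times> 'a) set \<Rightarrow> 'a list \<Rightarrow> nat set" where
  "XDes E xs = {i \<in> {1..length xs - 1}. (xs ! (i - 1), xs ! i) \<in> E}"

(* Formal power series in the commuting variables x_1, x_2, ... with integer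
   coefficients, represented by their coefficient function: the monomial
   prod_i x_i^(count M i) is encoded by the multiset M of variable indices. *)
type_synonym fps_inf = "nat multiset \<Rightarrow> int"

(* Fundamental quasisymmetric function F_I of degree n:
   sum of x_{i_1}...x_{i_n} over 1 <= i_1 <= ... <= i_n with i_j < i_{j+1} for j in I. *)
definition F_qsym :: "nat \<Rightarrow> nat set \<Rightarrow> fps_inf" where
  "F_qsym n I = (\<lambda>M. int (card {s :: nat list. length s = n \<and> (\<forall>j \<in> set s. 1 \<le> j)
      \<and> sorted s \<and> (\<forall>j \<in> I. 1 \<le> j \<and> j < n \<longrightarrow> s ! (j - 1) < s ! j)
      \<and> mset s = M}))"

definition redei_berge :: "'a set \<Rightarrow> ('a \<times> 'a) set \<Rightarrow> fps_inf" where
  "redei_berge V E = (\<lambda>M. \<Sum>\<sigma> \<in> Sigma_V V. F_qsym (card V) (XDes E \<sigma>) M)"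

end

theory Submission imports Defs begin

text \<open>The coefficient of a monomial \<open>M\<close> in \<open>U\<^sub>X\<close> counts words of (vertex, colour) pairs that
  enumerate \<open>V\<close>, have weakly increasing colours with multiset \<open>M\<close>, and contain no edge of \<open>X\<close>
  between consecutive letters of equal colour: such a word is \<open>\<sigma>\<close> zipped with an index sequence
  counted by \<open>F\<^bsub>XDes(\<sigma>)\<^esub>\<close>. Reversing every monochromatic block of such a word yields a word
  of the same kind for \<open>X\<^sup>op\<close>, and doing it twice gives the word back.\<close>

text \<open>Since \<open>sort_key\<close> is stable, this reverses each maximal block of equal colour.\<close>

definition reverse_colour_blocks :: "('a \<times> nat) list \<Rightarrow> ('a \<times> nat) list" where
  "reverse_colour_blocks zs = sort_key snd (rev zs)"

definition no_edge_within_blocks :: "('a \<times> 'a) set \<Rightarrow> ('a \<times> nat) list \<Rightarrow> bool" where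
  "no_edge_within_blocks E zs \<longleftrightarrow>
     (\<forall>i. Suc i < length zs \<longrightarrow> snd (zs ! i) = snd (zs ! Suc i) \<longrightarrow> (fst (zs ! i), fst (zs ! Suc i)) \<notin> E)"

definition coloured_words :: "'a set \<Rightarrow> ('a \<times> 'a) set \<Rightarrow> nat multiset \<Rightarrow> ('a \<times> nat) list set" where
  "coloured_words V E M = {zs. map fst zs \<in> Sigma_V V \<and> sorted (map snd zs)
     \<and> (\<forall>j \<in> set (map snd zs). 1 \<le> j) \<and> mset (map snd zs) = M \<and> no_edge_within_blocks E zs}"

lemma op_edges_op_edges [simp]: "op_edges (op_edges E) = E"
  unfolding op_edges_def by auto

lemma filter_key_eq_sort_key:
  "filter (\<lambda>x. f x = c) (sort_key f xs) = filter (\<lambda>x. f x = c) xs"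
  unfolding filter_sort by (rule properties_for_sort_key) (auto intro: sorted_map_same)

lemma filter_colour_reverse_colour_blocks:
  "filter (\<lambda>x. snd x = c) (reverse_colour_blocks zs) = rev (filter (\<lambda>x. snd x = c) zs)"
  unfolding reverse_colour_blocks_def filter_key_eq_sort_key by (simp add: rev_filter)

lemma reverse_colour_blocks_involutive:
  assumes "sorted (map snd zs)"
  shows "reverse_colour_blocks (reverse_colour_blocks zs) = zs"
  unfolding reverse_colour_blocks_def[of "reverse_colour_blocks zs"]
proof (rule properties_for_sort_key)
  show "mset zs = mset (rev (reverse_colour_blocks zs))"
    by (simp add: reverse_colour_blocks_def)
  fix k
  show "filter (\<lambda>x. snd k = snd x) zs = filter (\<lambda>x. snd k = snd x) (rev (reverse_colour_blocks zs))"
    using filter_colour_reverse_colour_blocks[of "snd k" zs]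
    by (simp add: rev_filter[symmetric] eq_commute[of "snd k"])
qed (fact assms)

lemma adjacent_in_filter_split:
  assumes "filter P zs = u @ b # a # w"
  shows "\<exists>p r s. zs = p @ b # r @ a # s \<and> filter P r = []"
  using assms
proof (induction zs arbitrary: u)
  case (Cons z zs)
  show ?case
  proof (cases "P z \<and> u = []")
    case True
    then have "z = b" and "filter P zs = a # w" using Cons.prems by auto
    then obtain r s where "zs = r @ a # s" "\<forall>x\<in>set r. \<not> P x"
      by (auto simp: filter_eq_Cons_iff)
    then show ?thesis using \<open>z = b\<close> by (metis append_Nil append_Cons filter_empty_conv)
  next
    case False
    then obtain u' where "filter P zs = u' @ b # a # w"
      using Cons.prems by (cases u) (auto split: if_splits)
    then obtain p r s where "zs = p @ b # r @ a # s \<and> filter P r = []"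
      using Cons.IH by blast
    then show ?thesis by (metis append_Cons)
  qed
qed simp

text \<open>Two equally coloured letters adjacent in the reversed-block word are adjacent, in the
  opposite order, in the subsequence of \<open>zs\<close> of their colour; as colours in \<open>zs\<close> are sorted,
  nothing lies between them in \<open>zs\<close> itself.\<close>

lemma adjacent_same_colour_reverse_colour_blocks:
  assumes sorted: "sorted (map snd zs)"
    and i: "Suc i < length (reverse_colour_blocks zs)"
    and a: "reverse_colour_blocks zs ! i = a" and b: "reverse_colour_blocks zs ! Suc i = b"
    and colour: "snd a = snd b"
  shows "\<exists>k. Suc k < length zs \<and> zs ! k = b \<and> zs ! Suc k = a"
proof -
  let ?ys = "reverse_colour_blocks zs" and ?Q = "\<lambda>x. snd x = snd a"
  have "?ys = take i ?ys @ a # b # drop (Suc (Suc i)) ?ys"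
    using i a b by (metis Cons_nth_drop_Suc Suc_lessD append_take_drop_id)
  then have "filter ?Q ?ys = filter ?Q (take i ?ys) @ a # b # filter ?Q (drop (Suc (Suc i)) ?ys)"
    using colour by (metis (mono_tags) filter.simps(2) filter_append)
  moreover have "filter ?Q zs = rev (filter ?Q ?ys)"
    using filter_colour_reverse_colour_blocks[of "snd a" zs] by simp
  ultimately have colour_class:
      "filter ?Q zs = rev (filter ?Q (drop (Suc (Suc i)) ?ys)) @ b # a # rev (filter ?Q (take i ?ys))"
    by simp
  obtain p r q where zs: "zs = p @ b # r @ a # q" and r: "filter ?Q r = []"
    using adjacent_in_filter_split[OF colour_class] by blast
  have "r = []"
  proof (rule ccontr)
    assume "r \<noteq> []"
    then obtain y where y: "y \<in> set r" by (cases r) auto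
    have "snd b \<le> snd y" "snd y \<le> snd a"
      using sorted y unfolding zs by (auto simp: sorted_append)
    then show False using r y colour by (simp add: filter_empty_conv)
  qed
  then show ?thesis
    using zs by (auto simp: nth_append intro!: exI[of _ "length p"])
qed

lemma no_edge_within_blocks_reverse_colour_blocks:
  assumes sorted: "sorted (map snd zs)" and ok: "no_edge_within_blocks E zs"
  shows "no_edge_within_blocks (op_edges E) (reverse_colour_blocks zs)"
  unfolding no_edge_within_blocks_def
proof (intro allI impI)
  fix i
  let ?a = "reverse_colour_blocks zs ! i" and ?b = "reverse_colour_blocks zs ! Suc i"
  assume "Suc i < length (reverse_colour_blocks zs)" and colour: "snd ?a = snd ?b"
  then obtain k where "Suc k < length zs" "zs ! k = ?b" "zs ! Suc k = ?a"
    using adjacent_same_colour_reverse_colour_blocks[OF sorted] by blast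
  then have "(fst ?b, fst ?a) \<notin> E"
    using ok colour unfolding no_edge_within_blocks_def by metis
  then show "(fst ?a, fst ?b) \<notin> op_edges E" by (simp add: op_edges_def)
qed

lemma reverse_colour_blocks_mem_coloured_words:
  assumes "zs \<in> coloured_words V E M"
  shows "reverse_colour_blocks zs \<in> coloured_words V (op_edges E) M"
proof -
  have fst: "mset (map fst (reverse_colour_blocks zs)) = mset (map fst zs)"
    and snd: "mset (map snd (reverse_colour_blocks zs)) = mset (map snd zs)"
    by (simp_all add: reverse_colour_blocks_def)
  then have "set (map fst (reverse_colour_blocks zs)) = set (map fst zs)"
    "set (map snd (reverse_colour_blocks zs)) = set (map snd zs)"
    by (metis set_mset_mset)+
  then show ?thesis
    using assms no_edge_within_blocks_reverse_colour_blocks[of zs E]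
      mset_eq_imp_distinct_iff[OF fst] snd
    unfolding coloured_words_def Sigma_V_def by (simp add: reverse_colour_blocks_def)
qed

lemma bij_betw_reverse_colour_blocks:
  "bij_betw reverse_colour_blocks (coloured_words V E M) (coloured_words V (op_edges E) M)"
proof (rule bij_betw_byWitness[where f' = reverse_colour_blocks])
  show "\<forall>zs \<in> coloured_words V E M. reverse_colour_blocks (reverse_colour_blocks zs) = zs"
    "\<forall>zs \<in> coloured_words V (op_edges E) M. reverse_colour_blocks (reverse_colour_blocks zs) = zs"
    by (simp_all add: coloured_words_def reverse_colour_blocks_involutive)
  show "reverse_colour_blocks ` coloured_words V E M \<subseteq> coloured_words V (op_edges E) M"
    "reverse_colour_blocks ` coloured_words V (op_edges E) M \<subseteq> coloured_words V E M"
    using reverse_colour_blocks_mem_coloured_words[of _ V _ M] by fastforce+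
qed

lemma Suc_mem_XDes_iff:
  "Suc i \<in> XDes E \<sigma> \<longleftrightarrow> Suc i < length \<sigma> \<and> (\<sigma> ! i, \<sigma> ! Suc i) \<in> E"
  by (auto simp: XDes_def)

lemma XDes_strict_iff_no_edge_within_blocks:
  assumes len: "length \<sigma> = length s" and sorted: "sorted s"
  shows "(\<forall>j \<in> XDes E \<sigma>. 1 \<le> j \<and> j < length \<sigma> \<longrightarrow> s ! (j - 1) < s ! j)
           \<longleftrightarrow> no_edge_within_blocks E (zip \<sigma> s)"
proof -
  have "(\<forall>j \<in> XDes E \<sigma>. 1 \<le> j \<and> j < length \<sigma> \<longrightarrow> s ! (j - 1) < s ! j)
          \<longleftrightarrow> (\<forall>i. Suc i \<in> XDes E \<sigma> \<longrightarrow> s ! i < s ! Suc i)" (is "?L \<longleftrightarrow> ?R")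
  proof
    assume ?L
    show ?R
    proof (intro allI impI)
      fix i assume i: "Suc i \<in> XDes E \<sigma>"
      show "s ! i < s ! Suc i"
        using bspec[OF \<open>?L\<close> i] i by (simp add: Suc_mem_XDes_iff)
    qed
  next
    assume ?R
    show ?L
    proof
      fix j assume "j \<in> XDes E \<sigma>"
      moreover then obtain i where "j = Suc i"
        using not0_implies_Suc by (force simp: XDes_def)
      ultimately show "1 \<le> j \<and> j < length \<sigma> \<longrightarrow> s ! (j - 1) < s ! j"
        using \<open>?R\<close> by simp
    qed
  qed
  also have "\<dots> \<longleftrightarrow> no_edge_within_blocks E (zip \<sigma> s)"
  proof -
    have "(Suc i < length \<sigma> \<and> (\<sigma> ! i, \<sigma> ! Suc i) \<in> E \<longrightarrow> s ! i < s ! Suc i)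
            \<longleftrightarrow> (Suc i < length \<sigma> \<longrightarrow> s ! i = s ! Suc i \<longrightarrow> (\<sigma> ! i, \<sigma> ! Suc i) \<notin> E)" for i
      using sorted_nth_mono[OF sorted, of i "Suc i"] len by (auto simp: order_less_le)
    then show ?thesis
      using len by (simp add: no_edge_within_blocks_def Suc_mem_XDes_iff)
  qed
  finally show ?thesis .
qed

lemma redei_berge_eq_card_coloured_words:
  assumes "finite V"
  shows "redei_berge V E M = int (card (coloured_words V E M))"
proof -
  define S where "S \<sigma> = {s :: nat list. length s = card V \<and> (\<forall>j \<in> set s. 1 \<le> j) \<and> sorted s
      \<and> (\<forall>j \<in> XDes E \<sigma>. 1 \<le> j \<and> j < card V \<longrightarrow> s ! (j - 1) < s ! j) \<and> mset s = M}" for \<sigma>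
  have length_Sigma_V: "length \<sigma> = card V" if "\<sigma> \<in> Sigma_V V" for \<sigma>
    using that by (auto simp: Sigma_V_def distinct_card)
  have "finite (Sigma_V V)"
    by (rule finite_subset[OF _ finite_lists_length_eq[OF assms, of "card V"]])
       (auto simp: length_Sigma_V Sigma_V_def)
  moreover have "finite (S \<sigma>)" for \<sigma>
    by (rule finite_subset[OF _ finite_lists_length_eq[OF finite_set_mset[of M], of "card V"]])
       (auto simp: S_def)
  ultimately have "redei_berge V E M = int (card (SIGMA \<sigma>:Sigma_V V. S \<sigma>))"
    unfolding redei_berge_def F_qsym_def S_def by (simp add: card_SigmaI)
  also have "card (SIGMA \<sigma>:Sigma_V V. S \<sigma>) = card (coloured_words V E M)"
  proof (rule bij_betw_same_card[of "\<lambda>(\<sigma>, s). zip \<sigma> s"],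
         rule bij_betw_byWitness[where f' = "\<lambda>zs. (map fst zs, map snd zs)"])
    have zip_mem: "zip \<sigma> s \<in> coloured_words V E M \<longleftrightarrow> \<sigma> \<in> Sigma_V V \<and> s \<in> S \<sigma>"
      if len: "length \<sigma> = length s" for \<sigma> s
      using XDes_strict_iff_no_edge_within_blocks[OF len, of E] length_Sigma_V len
      unfolding coloured_words_def S_def mem_Collect_eq map_fst_zip[OF len] map_snd_zip[OF len]
      by auto
    show "(\<lambda>(\<sigma>, s). zip \<sigma> s) ` (SIGMA \<sigma>:Sigma_V V. S \<sigma>) \<subseteq> coloured_words V E M"
      using zip_mem length_Sigma_V by (auto simp: S_def)
    show "(\<lambda>zs. (map fst zs, map snd zs)) ` coloured_words V E M \<subseteq> (SIGMA \<sigma>:Sigma_V V. S \<sigma>)"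
      using zip_mem[of "map fst zs" "map snd zs" for zs] by (auto simp: zip_map_fst_snd)
  qed (auto simp: zip_map_fst_snd S_def length_Sigma_V)
  finally show ?thesis .
qed

theorem mainTheorem10:
  fixes V :: "'a set" and E :: "('a \<times> 'a) set"
  assumes "digraph V E"
  shows "redei_berge V (op_edges E) = redei_berge V E"
proof
  fix M
  have "finite V" using assms by (simp add: digraph_def)
  then show "redei_berge V (op_edges E) M = redei_berge V E M"
    using bij_betw_same_card[OF bij_betw_reverse_colour_blocks[of V E M]]
    by (simp add: redei_berge_eq_card_coloured_words)
qed

end
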